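(* Let $n,m\ge2$ with $n\mid m$ and $\gcd(m,n_0)=1$. Let $f\colon G_n\times G_m\to\{0,1\}$ satisfy $\max_{\gamma\in S,\,i,j<2}|u(\gamma,i,j)-v_f(\gamma,i,j)|<\delta$, where $v_f(\gamma,i,j)=|\{(x,y)\in G_n\times G_m: f(x,y)=i,\ f(\pi_n(\gamma)x,\pi_m(\gamma)y)=j\}|/(|G_n||G_m|)$. Then there exists $Z\subseteq G_n$ such that $|\{(x,y): f(x,y)\ne f_Z(x,y)\}|<\frac1{16}|G_n||G_m|$.
   Context: $d\ge2$; $S$ is a finite symmetric subset of $\mathrm{SL}_d(\mathbb{Z})$. $G_n:=\mathrm{SL}_d(\mathbb{Z}/n\mathbb{Z})$, $\pi_n$ is reduction mod $n$ (also $G_m\to G_n$ for $n\mid m$). For a finite group $G$ and $A,T\subseteq G$, $\partial(A,T)=\{a\in A: Ta\not\subseteq A\}$ and $h(G,T)=\min\{|\partial(A,T)|/|A|:\emptyset\neq A\subseteq G, |A|\le|G|/2\}$. Fix $n_0\in\mathbb{N}^+$ and $\epsilon>0$ such that $h(G_m,\pi_m(S))\ge\epsilon$ for all $m\ge2$ with $\gcd(m,n_0)=1$; $\delta:=\epsilon/(32|S|)$. $u(\gamma,i,j)=1/2$ if $i=j$ and $0$ otherwise ($\gamma\in S$, $i,j\in\{0,1\}$). For $Z\subseteq G_n$, $f_Z\colon G_n\times G_m\to\{0,1\}$ is $f_Z(x,y)=1$ if $\pi_n(y)^{-1}x\in Z$ and $0$ otherwise. *)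

theory Defs
  imports "HOL-Analysis.Analysis"
begin

text \<open>Integer d x d matrices; the dimension d is the cardinality of the index type 'd.\<close>

definition SLZ :: "(int^'d^'d) set" where
  "SLZ = {A. det A = 1}"

definition redmat :: "nat \<Rightarrow> int^'d^'d \<Rightarrow> int^'d^'d" where
  "redmat n A = (\<chi> i j. A $ i $ j mod int n)"

text \<open>G_n = SL_d(Z/nZ), represented by matrices with entries in {0..n-1}.\<close>
definition Gmod :: "nat \<Rightarrow> (int^'d^'d) set" where
  "Gmod n = {A. (\<forall>i j. 0 \<le> A $ i $ j \<and> A $ i $ j < int n) \<and> det A mod int n = 1 mod int n}"

definition mulG :: "nat \<Rightarrow> int^'d^'d \<Rightarrow> int^'d^'d \<Rightarrow> int^'d^'d" where
  "mulG n A B = redmat n (A ** B)"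

definition idG :: "nat \<Rightarrow> int^'d^'d" where
  "idG n = redmat n (mat 1)"

definition invG :: "nat \<Rightarrow> int^'d^'d \<Rightarrow> int^'d^'d" where
  "invG n A = (THE B. B \<in> Gmod n \<and> mulG n B A = idG n)"

definition bdry :: "('a \<Rightarrow> 'a \<Rightarrow> 'a) \<Rightarrow> 'a set \<Rightarrow> 'a set \<Rightarrow> 'a set" where
  "bdry mul A T = {a \<in> A. \<not> ((\<lambda>t. mul t a) ` T \<subseteq> A)}"

definition hexp :: "'a set \<Rightarrow> ('a \<Rightarrow> 'a \<Rightarrow> 'a) \<Rightarrow> 'a set \<Rightarrow> real" where
  "hexp G mul T = Min {real (card (bdry mul A T)) / real (card A) | A.
       A \<subseteq> G \<and> A \<noteq> {} \<and> 2 * card A \<le> card G}"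

definition uu :: "nat \<Rightarrow> nat \<Rightarrow> real" where
  "uu i j = (if i = j then 1/2 else 0)"

definition vf :: "nat \<Rightarrow> nat \<Rightarrow> (int^'d^'d \<Rightarrow> int^'d^'d \<Rightarrow> nat) \<Rightarrow> int^'d^'d \<Rightarrow> nat \<Rightarrow> nat \<Rightarrow> real" where
  "vf n m f \<gamma> i j =
     real (card {(x, y). x \<in> Gmod n \<and> y \<in> Gmod m \<and> f x y = i \<and>
                  f (mulG n (redmat n \<gamma>) x) (mulG m (redmat m \<gamma>) y) = j})
     / (real (card (Gmod n :: (int^'d^'d) set)) * real (card (Gmod m :: (int^'d^'d) set)))"

definition fZ :: "nat \<Rightarrow> (int^'d^'d) set \<Rightarrow> int^'d^'d \<Rightarrow> int^'d^'d \<Rightarrow> nat" where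
  "fZ n Z x y = (if mulG n (invG n (redmat n y)) x \<in> Z then 1 else 0)"

end

theory Submission
  imports Defs "HOL-Number_Theory.Cong"
begin

text \<open>
Substituting \<open>x = \<pi>\<^sub>n(y) z\<close> turns \<open>f\<close> into a family of functions
\<open>h\<^sub>z(y) = f(\<pi>\<^sub>n(y) z, y)\<close> on \<open>G\<^sub>m\<close>, one for each \<open>z \<in> G\<^sub>n\<close>. Since
\<open>\<pi>\<^sub>n(\<gamma> y) z = \<pi>\<^sub>n(\<gamma>) \<pi>\<^sub>n(y) z\<close>, the pairs on which \<open>f\<close> differs from its
\<open>\<gamma>\<close>-translate are exactly the pairs \<open>(z, y)\<close> with \<open>h\<^sub>z(y) \<noteq> h\<^sub>z(\<gamma> y)\<close>.
Let \<open>Z\<close> be the set of \<open>z\<close> for which \<open>h\<^sub>z\<close> is 1 on more than half of \<open>G\<^sub>m\<close>;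
then \<open>f\<close> and \<open>f\<^sub>Z\<close> differ exactly on the minority sets of the \<open>h\<^sub>z\<close>. A minority
set has at most \<open>|G\<^sub>m|/2\<close> elements, so expansion of \<open>G\<^sub>m\<close> bounds \<open>\<epsilon>\<close> times its size
by the number of \<open>\<gamma>\<close>-edges along which \<open>h\<^sub>z\<close> changes value. Summing over \<open>z\<close>,
\<open>\<epsilon>\<close> times the number of mismatches is at most the total number of disagreements of
\<open>f\<close> with its translates, which closeness to \<open>u\<close> bounds by
\<open>|S| \<cdot> 2\<delta> |G\<^sub>n||G\<^sub>m| = \<epsilon> |G\<^sub>n||G\<^sub>m|/16\<close>.
\<close>

section \<open>The groups \<open>SL\<^sub>d(\<int>/k\<int>)\<close>\<close>

definition adjugate :: "'a::comm_ring_1^'n^'n \<Rightarrow> 'a^'n^'n" where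
  "adjugate A = (\<chi> i k. det (\<chi> r. if r = k then axis i 1 else row r A))"

lemma matrix_mul_adjugate: "A ** adjugate A = mat (det A)"
proof -
  have "(A ** adjugate A) $ j $ k = (if j = k then det A else 0)" for j k
  proof -
    have "(A ** adjugate A) $ j $ k
          = (\<Sum>i\<in>UNIV. det (\<chi> r. if r = k then A$j$i *s axis i 1 else row r A))"
      by (simp add: matrix_matrix_mult_def adjugate_def det_row_mul)
    also have "\<dots> = det (\<chi> r. if r = k then (\<Sum>i\<in>UNIV. A$j$i *s axis i 1) else row r A)"
      by (rule det_linear_row_sum[symmetric]) simp
    also have "(\<Sum>i\<in>UNIV. A$j$i *s axis i 1) = row j A"
      by (simp add: vec_eq_iff row_def sum_component axis_def if_distrib cong: if_cong)
    also have "det (\<chi> r. if r = k then row j A else row r A) = (if j = k then det A else 0)"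
    proof (cases "j = k")
      case True
      then have "(\<chi> r. if r = k then row j A else row r A) = A" by (simp add: vec_eq_iff row_def)
      with True show ?thesis by simp
    next
      case False
      then show ?thesis
        by (simp, intro det_identical_rows[of j k]) (auto simp: row_def vec_eq_iff)
    qed
    finally show ?thesis .
  qed
  then show ?thesis by (simp add: vec_eq_iff mat_def)
qed

lemma redmat_nth [simp]: "redmat k A $ i $ j = A $ i $ j mod int k"
  by (simp add: redmat_def)

lemma redmat_mul_left: "redmat k (redmat k A ** B) = redmat k (A ** B)"
proof -
  have "[(\<Sum>l\<in>UNIV. (A$i$l mod int k) * B$l$j) = (\<Sum>l\<in>UNIV. A$i$l * B$l$j)] (mod int k)" for i j
    by (intro cong_sum cong_mult) simp_all
  then show ?thesis by (simp add: vec_eq_iff matrix_matrix_mult_def cong_def)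
qed

lemma redmat_mul_right: "redmat k (A ** redmat k B) = redmat k (A ** B)"
proof -
  have "[(\<Sum>l\<in>UNIV. A$i$l * (B$l$j mod int k)) = (\<Sum>l\<in>UNIV. A$i$l * B$l$j)] (mod int k)" for i j
    by (intro cong_sum cong_mult) simp_all
  then show ?thesis by (simp add: vec_eq_iff matrix_matrix_mult_def cong_def)
qed

lemma redmat_redmat: "n dvd m \<Longrightarrow> redmat n (redmat m A) = redmat n A"
  by (simp add: vec_eq_iff mod_mod_cancel)

lemma det_redmat_cong: "[det (redmat k A) = det A] (mod int k)"
  unfolding det_def by (intro cong_sum cong_mult cong_prod) simp_all

lemma Gmod_redmat: "A \<in> Gmod k \<Longrightarrow> redmat k A = A"
  by (simp add: Gmod_def vec_eq_iff)

lemma Gmod_det_cong: "A \<in> Gmod k \<Longrightarrow> [det A = 1] (mod int k)"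
  by (simp add: Gmod_def cong_def)

lemma redmat_in_Gmod: "0 < k \<Longrightarrow> [det A = 1] (mod int k) \<Longrightarrow> redmat k A \<in> Gmod k"
  using det_redmat_cong[of k A] by (simp add: Gmod_def cong_def)

lemma redmat_SLZ_in_Gmod: "0 < k \<Longrightarrow> \<gamma> \<in> SLZ \<Longrightarrow> redmat k \<gamma> \<in> Gmod k"
  by (rule redmat_in_Gmod) (auto simp: SLZ_def)

lemma redmat_Gmod_dvd: "0 < n \<Longrightarrow> n dvd m \<Longrightarrow> A \<in> Gmod m \<Longrightarrow> redmat n A \<in> Gmod n"
  by (rule redmat_in_Gmod) (auto intro: cong_dvd_modulus Gmod_det_cong)

lemma finite_Gmod: "finite (Gmod k :: (int^'d^'d) set)"
proof -
  let ?F = "PiE (UNIV :: 'd set) (\<lambda>_. PiE (UNIV :: 'd set) (\<lambda>_. {0..<int k}))"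
  have "Gmod k \<subseteq> (\<lambda>f. \<chi> i j. f i j) ` ?F"
  proof
    fix A :: "int^'d^'d" assume "A \<in> Gmod k"
    then have "(\<lambda>i j. A$i$j) \<in> ?F" by (auto simp: Gmod_def)
    then show "A \<in> (\<lambda>f. \<chi> i j. f i j) ` ?F" by (intro image_eqI[of _ _ "\<lambda>i j. A$i$j"]) simp_all
  qed
  moreover have "finite ?F" by (intro finite_PiE) auto
  ultimately show ?thesis by (meson finite_imageI finite_subset)
qed

lemma mulG_closed:
  assumes "0 < k" "A \<in> Gmod k" "B \<in> Gmod k"
  shows "mulG k A B \<in> Gmod k"
proof -
  have "[det A * det B = 1 * 1] (mod int k)"
    using assms(2,3) by (intro cong_mult Gmod_det_cong)
  then show ?thesis
    unfolding mulG_def by (intro redmat_in_Gmod[OF assms(1)]) (simp add: det_mul)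
qed

lemma idG_in_Gmod: "0 < k \<Longrightarrow> idG k \<in> Gmod k"
  unfolding idG_def by (rule redmat_in_Gmod) auto

lemma mulG_assoc: "mulG k (mulG k A B) C = mulG k A (mulG k B C)"
  by (simp add: mulG_def redmat_mul_left redmat_mul_right matrix_mul_assoc)

lemma mulG_idG_left: "A \<in> Gmod k \<Longrightarrow> mulG k (idG k) A = A"
  by (simp add: mulG_def idG_def redmat_mul_left Gmod_redmat)

lemma mulG_idG_right: "A \<in> Gmod k \<Longrightarrow> mulG k A (idG k) = A"
  by (simp add: mulG_def idG_def redmat_mul_right Gmod_redmat)

lemma redmat_mulG: "n dvd m \<Longrightarrow> redmat n (mulG m A B) = mulG n (redmat n A) (redmat n B)"
  by (simp add: mulG_def redmat_redmat redmat_mul_left redmat_mul_right)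

lemma Gmod_right_inverse:
  assumes "0 < k" "A \<in> Gmod k"
  obtains B where "B \<in> Gmod k" "mulG k A B = idG k"
proof -
  define C where "C = adjugate A"
  have det_A: "[det A = 1] (mod int k)" using assms(2) by (rule Gmod_det_cong)
  have inv: "redmat k (A ** C) = idG k"
    unfolding idG_def C_def matrix_mul_adjugate
    using det_A by (simp add: vec_eq_iff mat_def cong_def)
  have "[det C = det A * det C] (mod int k)"
    using cong_scalar_right[OF cong_sym[OF det_A], of "det C"] by simp
  also have "det A * det C = det (A ** C)" by (simp add: det_mul)
  also have "[det (A ** C) = det (redmat k (A ** C))] (mod int k)"
    by (rule cong_sym[OF det_redmat_cong])
  also have "[det (redmat k (A ** C)) = 1] (mod int k)"
    unfolding inv idG_def using det_redmat_cong[of k "mat 1"] by simp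
  finally have "redmat k C \<in> Gmod k" by (rule redmat_in_Gmod[OF assms(1)])
  moreover have "mulG k A (redmat k C) = idG k"
    unfolding mulG_def redmat_mul_right by (rule inv)
  ultimately show ?thesis by (rule that)
qed

lemma invG:
  assumes "0 < k" "A \<in> Gmod k"
  shows invG_in_Gmod: "invG k A \<in> Gmod k"
    and mulG_invG_left: "mulG k (invG k A) A = idG k"
    and mulG_invG_right: "mulG k A (invG k A) = idG k"
proof -
  obtain B where B: "B \<in> Gmod k" "mulG k A B = idG k"
    using Gmod_right_inverse[OF assms] .
  obtain C where C: "C \<in> Gmod k" "mulG k B C = idG k"
    using Gmod_right_inverse[OF assms(1) B(1)] .
  \<comment> \<open>\<open>A = A(BC) = (AB)C = C\<close>, so the right inverse \<open>B\<close> is also a left inverse\<close>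
  have "A = C"
    by (metis B(2) C mulG_assoc mulG_idG_left mulG_idG_right assms(2))
  with C have left: "mulG k B A = idG k" by simp
  have "invG k A = B"
    unfolding invG_def
  proof (rule the_equality)
    fix B' assume "B' \<in> Gmod k \<and> mulG k B' A = idG k"
    then show "B' = B"
      by (metis B mulG_assoc mulG_idG_left mulG_idG_right)
  qed (use B(1) left in simp)
  with B left show "invG k A \<in> Gmod k" "mulG k (invG k A) A = idG k" "mulG k A (invG k A) = idG k"
    by simp_all
qed

lemma bij_betw_mulG_left:
  assumes "0 < k" "A \<in> Gmod k"
  shows "bij_betw (mulG k A) (Gmod k) (Gmod k)"
proof (rule bij_betw_byWitness[where f' = "mulG k (invG k A)"])
  show "\<forall>z\<in>Gmod k. mulG k (invG k A) (mulG k A z) = z" "\<forall>z\<in>Gmod k. mulG k A (mulG k (invG k A) z) = z"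
    using assms by (simp_all add: mulG_assoc[symmetric] mulG_invG_left mulG_invG_right mulG_idG_left)
qed (use assms in \<open>auto intro: mulG_closed invG_in_Gmod\<close>)

section \<open>Counting along translates, and edge expansion\<close>

lemma card_pairs_translated:
  assumes "finite A" "finite B" and bij: "\<And>y. y \<in> B \<Longrightarrow> bij_betw (\<tau> y) A A"
  shows "card {(x, y). x \<in> A \<and> y \<in> B \<and> Q x y} = (\<Sum>z\<in>A. card {y \<in> B. Q (\<tau> y z) y})"
proof -
  let ?T = "SIGMA z:A. {y \<in> B. Q (\<tau> y z) y}"
  let ?f = "\<lambda>(z, y). (\<tau> y z, y)"
  have inj: "inj_on ?f ?T"
  proof (rule inj_onI)
    fix p q assume "p \<in> ?T" "q \<in> ?T" "?f p = ?f q"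
    moreover obtain z y z' y' where "p = (z, y)" "q = (z', y')" by fastforce
    ultimately have "y' = y" "z \<in> A" "z' \<in> A" "y \<in> B" "\<tau> y z = \<tau> y z'" by auto
    then show "p = q"
      using inj_onD[OF bij_betw_imp_inj_on[OF bij]] \<open>p = (z, y)\<close> \<open>q = (z', y')\<close> by blast
  qed
  have img: "?f ` ?T = {(x, y). x \<in> A \<and> y \<in> B \<and> Q x y}"
  proof (intro equalityI subsetI)
    fix p assume "p \<in> ?f ` ?T"
    then obtain z y where "p = (\<tau> y z, y)" "z \<in> A" "y \<in> B" "Q (\<tau> y z) y" by auto
    then show "p \<in> {(x, y). x \<in> A \<and> y \<in> B \<and> Q x y}"
      using bij_betw_apply[OF bij] by blast
  next
    fix p assume "p \<in> {(x, y). x \<in> A \<and> y \<in> B \<and> Q x y}"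
    then obtain x y where p: "p = (x, y)" "x \<in> A" "y \<in> B" "Q x y" by blast
    then obtain z where "z \<in> A" "x = \<tau> y z"
      using bij_betw_imp_surj_on[OF bij[of y]] by blast
    with p show "p \<in> ?f ` ?T" by (intro image_eqI[of _ _ "(z, y)"]) auto
  qed
  have "card {(x, y). x \<in> A \<and> y \<in> B \<and> Q x y} = card ?T"
    unfolding img[symmetric] by (rule card_image[OF inj])
  also have "\<dots> = (\<Sum>z\<in>A. card {y \<in> B. Q (\<tau> y z) y})"
    using assms(1,2) by (intro card_SigmaI) auto
  finally show ?thesis .
qed

lemma hexp_le:
  assumes "finite G" "X \<subseteq> G" "X \<noteq> {}" "2 * card X \<le> card G"
  shows "hexp G mul T \<le> real (card (bdry mul X T)) / real (card X)"
proof -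
  let ?C = "{A. A \<subseteq> G \<and> A \<noteq> {} \<and> 2 * card A \<le> card G}"
  let ?r = "\<lambda>A. real (card (bdry mul A T)) / real (card A)"
  have "?C \<subseteq> Pow G" by blast
  then have "finite ?C" using assms(1) by (simp add: finite_subset)
  moreover have "X \<in> ?C" using assms(2-4) by blast
  ultimately have "Min (?r ` ?C) \<le> ?r X" by (intro Min_le finite_imageI imageI)
  moreover have "{?r A | A. A \<subseteq> G \<and> A \<noteq> {} \<and> 2 * card A \<le> card G} = ?r ` ?C" by blast
  ultimately show ?thesis unfolding hexp_def by (simp only:)
qed

lemma expansion_escape_bound:
  assumes "finite G" "finite I" "\<epsilon> \<le> hexp G mul (g ` I)" "X \<subseteq> G" "2 * card X \<le> card G"
  shows "\<epsilon> * card X \<le> (\<Sum>i\<in>I. card {y \<in> X. mul (g i) y \<notin> X})"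
proof (cases "X = {}")
  case False
  have "finite X" using assms(1,4) by (rule finite_subset[rotated])
  with False have "0 < real (card X)" by (simp add: card_gt_0_iff)
  with hexp_le[OF assms(1,4) False assms(5), of mul "g ` I"]
  have "hexp G mul (g ` I) * card X \<le> card (bdry mul X (g ` I))"
    by (simp add: pos_le_divide_eq)
  then have "\<epsilon> * card X \<le> card (bdry mul X (g ` I))"
    using mult_right_mono[OF assms(3), of "real (card X)"] by linarith
  also have "\<dots> \<le> card (\<Union>i\<in>I. {y \<in> X. mul (g i) y \<notin> X})"
  proof -
    have sub: "bdry mul X (g ` I) \<subseteq> (\<Union>i\<in>I. {y \<in> X. mul (g i) y \<notin> X})"
      by (auto simp: bdry_def image_subset_iff)
    have fin: "finite (\<Union>i\<in>I. {y \<in> X. mul (g i) y \<notin> X})"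
      using \<open>finite X\<close> by (rule finite_subset[rotated]) blast
    show ?thesis
      unfolding of_nat_le_iff by (rule card_mono[OF fin sub])
  qed
  also have "\<dots> \<le> (\<Sum>i\<in>I. card {y \<in> X. mul (g i) y \<notin> X})"
    unfolding of_nat_le_iff by (rule card_UN_le[OF assms(2)])
  finally show ?thesis .
qed simp

lemma expansion_minority_bound:
  assumes "finite G" "finite I" "\<epsilon> \<le> hexp G mul (g ` I)"
    and closed: "\<And>i y. i \<in> I \<Longrightarrow> y \<in> G \<Longrightarrow> mul (g i) y \<in> G"
  shows "\<epsilon> * card {y \<in> G. P y \<noteq> (card G < 2 * card {y \<in> G. P y})}
         \<le> (\<Sum>i\<in>I. card {y \<in> G. P y \<noteq> P (mul (g i) y)})"
proof -
  define b where "b = (card G < 2 * card {y \<in> G. P y})"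
  define X where "X = {y \<in> G. P y \<noteq> b}"
  have "2 * card X \<le> card G"
  proof (cases b)
    case True
    then have "X = G - {y \<in> G. P y}" by (auto simp: X_def)
    then have "card X = card G - card {y \<in> G. P y}"
      using assms(1) by (simp add: card_Diff_subset)
    with True show ?thesis by (simp add: b_def)
  qed (simp add: X_def b_def)
  moreover have "X \<subseteq> G" by (auto simp: X_def)
  ultimately have "\<epsilon> * card X \<le> (\<Sum>i\<in>I. card {y \<in> X. mul (g i) y \<notin> X})"
    using expansion_escape_bound[OF assms(1-3)] by blast
  also have "\<dots> \<le> (\<Sum>i\<in>I. card {y \<in> G. P y \<noteq> P (mul (g i) y)})"
    unfolding of_nat_le_iff
  proof (rule sum_mono)
    fix i assume "i \<in> I"
    then have "{y \<in> X. mul (g i) y \<notin> X} \<subseteq> {y \<in> G. P y \<noteq> P (mul (g i) y)}"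
      using closed by (auto simp: X_def)
    with assms(1) show "card {y \<in> X. mul (g i) y \<notin> X} \<le> card {y \<in> G. P y \<noteq> P (mul (g i) y)}"
      by (simp add: card_mono)
  qed
  finally show ?thesis
    unfolding X_def b_def .
qed

section \<open>Functions on \<open>G\<^sub>n \<times> G\<^sub>m\<close> fibred over \<open>G\<^sub>n\<close>\<close>

definition majority_fibres :: "nat \<Rightarrow> nat \<Rightarrow> (int^'d^'d \<Rightarrow> int^'d^'d \<Rightarrow> bool) \<Rightarrow> (int^'d^'d) set" where
  "majority_fibres n m F = {z \<in> Gmod n. card (Gmod m :: (int^'d^'d) set)
      < 2 * card {y \<in> Gmod m. F (mulG n (redmat n y) z) y}}"

lemma card_pairs_translated_mulG:
  assumes "0 < n" "n dvd m"
  shows "card {(x, y). x \<in> Gmod n \<and> y \<in> Gmod m \<and> Q x y}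
         = (\<Sum>z\<in>Gmod n. card {y \<in> Gmod m. Q (mulG n (redmat n y) z) y})"
  using assms
  by (intro card_pairs_translated[where \<tau> = "\<lambda>y. mulG n (redmat n y)"] finite_Gmod
      bij_betw_mulG_left redmat_Gmod_dvd)

lemma card_mismatch_fibres:
  assumes "0 < n" "n dvd m"
  shows "card {(x, y). x \<in> Gmod n \<and> y \<in> Gmod m \<and> F x y \<noteq> (mulG n (invG n (redmat n y)) x \<in> Z)}
         = (\<Sum>z\<in>Gmod n. card {y \<in> Gmod m. F (mulG n (redmat n y) z) y \<noteq> (z \<in> Z)})"
proof -
  have cancel: "mulG n (invG n (redmat n y)) (mulG n (redmat n y) z) = z"
    if "y \<in> Gmod m" "z \<in> Gmod n" for y z
    using that assms redmat_Gmod_dvd[OF assms that(1)]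
    by (simp add: mulG_assoc[symmetric] mulG_invG_left mulG_idG_left)
  then show ?thesis
    unfolding card_pairs_translated_mulG[OF assms]
    by (intro sum.cong refl arg_cong[where f = card] Collect_cong) (auto simp: cancel)
qed

lemma card_disagreement_fibres:
  assumes "0 < n" "n dvd m"
  shows "card {(x, y). x \<in> Gmod n \<and> y \<in> Gmod m \<and>
                 F x y \<noteq> F (mulG n (redmat n \<gamma>) x) (mulG m (redmat m \<gamma>) y)}
         = (\<Sum>z\<in>Gmod n. card {y \<in> Gmod m. F (mulG n (redmat n y) z) y
                 \<noteq> F (mulG n (redmat n (mulG m (redmat m \<gamma>) y)) z) (mulG m (redmat m \<gamma>) y)})"
proof -
  have "mulG n (redmat n (mulG m (redmat m \<gamma>) y)) z = mulG n (redmat n \<gamma>) (mulG n (redmat n y) z)"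
    for y z
    by (simp add: redmat_mulG[OF assms(2)] redmat_redmat[OF assms(2)] mulG_assoc)
  then show ?thesis
    by (simp only: card_pairs_translated_mulG[OF assms])
qed

lemma fibre_expansion:
  fixes F :: "int^'d^'d \<Rightarrow> int^'d^'d \<Rightarrow> bool"
  assumes "0 < n" "0 < m" "n dvd m" "finite S" "S \<subseteq> SLZ"
    and expander: "\<epsilon> \<le> hexp (Gmod m :: (int^'d^'d) set) (mulG m) (redmat m ` S)"
  shows "\<epsilon> * card {(x, y). x \<in> Gmod n \<and> y \<in> Gmod m \<and>
                      F x y \<noteq> (mulG n (invG n (redmat n y)) x \<in> majority_fibres n m F)}
         \<le> (\<Sum>\<gamma>\<in>S. card {(x, y). x \<in> Gmod n \<and> y \<in> Gmod m \<and>
                      F x y \<noteq> F (mulG n (redmat n \<gamma>) x) (mulG m (redmat m \<gamma>) y)})"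
proof -
  let ?N = "Gmod n :: (int^'d^'d) set" and ?M = "Gmod m :: (int^'d^'d) set"
  define P where "P z y = F (mulG n (redmat n y) z) y" for z y
  have closed: "mulG m (redmat m \<gamma>) y \<in> ?M" if "\<gamma> \<in> S" "y \<in> ?M" for \<gamma> y
    using that assms(2,5) by (blast intro: mulG_closed redmat_SLZ_in_Gmod)
  have "\<epsilon> * card {y \<in> ?M. P z y \<noteq> (z \<in> majority_fibres n m F)}
        \<le> (\<Sum>\<gamma>\<in>S. card {y \<in> ?M. P z y \<noteq> P z (mulG m (redmat m \<gamma>) y)})" if "z \<in> ?N" for z
    using expansion_minority_bound[OF finite_Gmod assms(4) expander closed, of "P z"] that
    by (simp add: majority_fibres_def P_def)
  then have "\<epsilon> * (\<Sum>z\<in>?N. card {y \<in> ?M. P z y \<noteq> (z \<in> majority_fibres n m F)})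
        \<le> (\<Sum>z\<in>?N. \<Sum>\<gamma>\<in>S. card {y \<in> ?M. P z y \<noteq> P z (mulG m (redmat m \<gamma>) y)})"
    unfolding of_nat_sum sum_distrib_left by (rule sum_mono)
  then show ?thesis
    unfolding card_mismatch_fibres[OF assms(1,3)] card_disagreement_fibres[OF assms(1,3)]
      sum.swap[of _ S] P_def .
qed

lemma card_Gmod_pos: "0 < k \<Longrightarrow> 0 < card (Gmod k :: (int^'d^'d) set)"
  unfolding card_gt_0_iff using idG_in_Gmod finite_Gmod by blast

lemma card_disagreement_less:
  fixes f :: "int^'d^'d \<Rightarrow> int^'d^'d \<Rightarrow> nat" and \<delta> :: real
  assumes "0 < n" "0 < m" "\<gamma> \<in> SLZ"
    and f_bin: "\<forall>x\<in>Gmod n. \<forall>y\<in>Gmod m. f x y \<in> {0, 1}"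
    and up: "vf n m f \<gamma> 0 1 < \<delta>" and down: "vf n m f \<gamma> 1 0 < \<delta>"
  shows "real (card {(x, y). x \<in> Gmod n \<and> y \<in> Gmod m \<and>
                 (f x y = 1) \<noteq> (f (mulG n (redmat n \<gamma>) x) (mulG m (redmat m \<gamma>) y) = 1)})
         < 2 * \<delta> * (real (card (Gmod n :: (int^'d^'d) set)) * real (card (Gmod m :: (int^'d^'d) set)))"
proof -
  let ?N = "Gmod n :: (int^'d^'d) set" and ?M = "Gmod m :: (int^'d^'d) set"
  define E where "E i j = {(x, y). x \<in> ?N \<and> y \<in> ?M \<and> f x y = i \<and>
                  f (mulG n (redmat n \<gamma>) x) (mulG m (redmat m \<gamma>) y) = j}" for i j
  have cards: "card ?N \<noteq> 0" "card ?M \<noteq> 0"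
    using card_Gmod_pos[OF assms(1)] card_Gmod_pos[OF assms(2)] by simp_all
  then have NM: "0 < real (card ?N) * real (card ?M)" by simp
  have fin: "finite (E i j)" for i j
    by (rule finite_subset[of _ "?N \<times> ?M"]) (auto simp: E_def finite_Gmod)
  have "{(x, y). x \<in> ?N \<and> y \<in> ?M \<and>
           (f x y = 1) \<noteq> (f (mulG n (redmat n \<gamma>) x) (mulG m (redmat m \<gamma>) y) = 1)} \<subseteq> E 0 1 \<union> E 1 0"
    (is "?D \<subseteq> _")
  proof
    fix p assume "p \<in> {(x, y). x \<in> ?N \<and> y \<in> ?M \<and>
           (f x y = 1) \<noteq> (f (mulG n (redmat n \<gamma>) x) (mulG m (redmat m \<gamma>) y) = 1)}"
    then obtain x y where p: "p = (x, y)" and xy: "x \<in> ?N" "y \<in> ?M"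
      and neq: "(f x y = 1) \<noteq> (f (mulG n (redmat n \<gamma>) x) (mulG m (redmat m \<gamma>) y) = 1)"
      by blast
    have xy': "mulG n (redmat n \<gamma>) x \<in> ?N" "mulG m (redmat m \<gamma>) y \<in> ?M"
      using xy assms(1-3) by (simp_all add: mulG_closed redmat_SLZ_in_Gmod)
    show "p \<in> E 0 1 \<union> E 1 0"
      using f_bin[rule_format, OF xy] f_bin[rule_format, OF xy'] neq xy p by (auto simp: E_def)
  qed
  then have "card ?D \<le> card (E 0 1 \<union> E 1 0)"
    using fin by (simp add: card_mono)
  also have "\<dots> \<le> card (E 0 1) + card (E 1 0)"
    by (rule card_Un_le)
  finally have "real (card ?D) \<le> real (card (E 0 1)) + real (card (E 1 0))"
    by linarith
  moreover have E_card: "real (card (E i j)) = vf n m f \<gamma> i j * (real (card ?N) * real (card ?M))" for i j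
    using cards by (simp add: vf_def E_def)
  ultimately show ?thesis
    using E_card[of 0 1] E_card[of 1 0] mult_strict_right_mono[OF up NM] mult_strict_right_mono[OF down NM]
    by linarith
qed

lemma sum_card_disagreement_less:
  fixes f :: "int^'d^'d \<Rightarrow> int^'d^'d \<Rightarrow> nat" and \<epsilon> \<delta> :: real
  assumes pos: "0 < n" "0 < m" and "finite S" "S \<subseteq> SLZ" "0 < \<epsilon>"
    and delta_def: "\<delta> = \<epsilon> / (32 * real (card S))"
    and f_bin: "\<forall>x\<in>Gmod n. \<forall>y\<in>Gmod m. f x y \<in> {0, 1}"
    and close: "\<forall>\<gamma>\<in>S. \<forall>i<2. \<forall>j<2. \<bar>uu i j - vf n m f \<gamma> i j\<bar> < \<delta>"
  shows "real (\<Sum>\<gamma>\<in>S. card {(x, y). x \<in> Gmod n \<and> y \<in> Gmod m \<and>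
                 (f x y = 1) \<noteq> (f (mulG n (redmat n \<gamma>) x) (mulG m (redmat m \<gamma>) y) = 1)})
         < \<epsilon> * (real (card (Gmod n :: (int^'d^'d) set)) * real (card (Gmod m :: (int^'d^'d) set)) / 16)"
proof (cases "S = {}")
  case True
  \<comment> \<open>then \<open>\<delta> = \<epsilon> / 0 = 0\<close> is junk, but the sum is empty\<close>
  then show ?thesis
    using assms(5) by (simp add: card_Gmod_pos[OF pos(1)] card_Gmod_pos[OF pos(2)])
next
  case False
  let ?NM = "real (card (Gmod n :: (int^'d^'d) set)) * real (card (Gmod m :: (int^'d^'d) set))"
  have "real (card {(x, y). x \<in> Gmod n \<and> y \<in> Gmod m \<and>
          (f x y = 1) \<noteq> (f (mulG n (redmat n \<gamma>) x) (mulG m (redmat m \<gamma>) y) = 1)}) < 2 * \<delta> * ?NM"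
    if "\<gamma> \<in> S" for \<gamma>
  proof -
    have "\<bar>uu 0 1 - vf n m f \<gamma> 0 1\<bar> < \<delta>" "\<bar>uu 1 0 - vf n m f \<gamma> 1 0\<bar> < \<delta>"
      using close that by simp_all
    then have "vf n m f \<gamma> 0 1 < \<delta>" "vf n m f \<gamma> 1 0 < \<delta>"
      by (simp_all add: uu_def)
    then show ?thesis
      by (rule card_disagreement_less[OF pos assms(4)[THEN subsetD, OF that] f_bin])
  qed
  then have "real (\<Sum>\<gamma>\<in>S. card {(x, y). x \<in> Gmod n \<and> y \<in> Gmod m \<and>
                 (f x y = 1) \<noteq> (f (mulG n (redmat n \<gamma>) x) (mulG m (redmat m \<gamma>) y) = 1)})
             < (\<Sum>\<gamma>\<in>S. 2 * \<delta> * ?NM)"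
    unfolding of_nat_sum using assms(3) False by (intro sum_strict_mono) auto
  also have "\<dots> = \<epsilon> * (?NM / 16)"
    using assms(3) False by (simp add: delta_def card_gt_0_iff)
  finally show ?thesis .
qed

theorem claim1:
  fixes S :: "(int^'d^'d) set" and n0 :: nat and \<epsilon> :: real and \<delta> :: real
    and n m :: nat and f :: "int^'d^'d \<Rightarrow> int^'d^'d \<Rightarrow> nat"
  assumes d2: "CARD('d) \<ge> 2"
    and S_fin: "finite S" and S_SL: "S \<subseteq> SLZ"
    and S_sym: "\<forall>g\<in>S. \<exists>h\<in>S. g ** h = mat 1"
    and n0_pos: "n0 > 0" and eps_pos: "\<epsilon> > 0"
    and expander: "\<forall>k::nat. k \<ge> 2 \<and> coprime k n0 \<longrightarrow>
                     hexp (Gmod k :: (int^'d^'d) set) (mulG k) (redmat k ` S) \<ge> \<epsilon>"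
    and delta_def: "\<delta> = \<epsilon> / (32 * real (card S))"
    and n2: "n \<ge> 2" and m2: "m \<ge> 2" and ndvd: "n dvd m" and cop: "coprime m n0"
    and f_bin: "\<forall>x\<in>Gmod n. \<forall>y\<in>Gmod m. f x y \<in> {0, 1}"
    and close: "\<forall>\<gamma>\<in>S. \<forall>i<2. \<forall>j<2. \<bar>uu i j - vf n m f \<gamma> i j\<bar> < \<delta>"
  shows "\<exists>Z \<subseteq> Gmod n.
           real (card {(x, y). x \<in> Gmod n \<and> y \<in> Gmod m \<and> f x y \<noteq> fZ n Z x y})
           < real (card (Gmod n :: (int^'d^'d) set)) * real (card (Gmod m :: (int^'d^'d) set)) / 16"
proof -
  define F where "F x y = (f x y = 1)" for x y
  define Z where "Z = majority_fibres n m F"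
  have pos: "0 < n" "0 < m" using n2 m2 by simp_all
  have exp_m: "\<epsilon> \<le> hexp (Gmod m :: (int^'d^'d) set) (mulG m) (redmat m ` S)"
    using expander m2 cop by blast
  have "(f x y \<noteq> fZ n Z x y) = (F x y \<noteq> (mulG n (invG n (redmat n y)) x \<in> Z))"
    if "x \<in> Gmod n" "y \<in> Gmod m" for x y
    using f_bin[rule_format, OF that] by (auto simp: fZ_def F_def)
  then have mismatch: "{(x, y). x \<in> Gmod n \<and> y \<in> Gmod m \<and> f x y \<noteq> fZ n Z x y}
      = {(x, y). x \<in> Gmod n \<and> y \<in> Gmod m \<and> F x y \<noteq> (mulG n (invG n (redmat n y)) x \<in> Z)}"
    by blast
  have "\<epsilon> * card {(x, y). x \<in> Gmod n \<and> y \<in> Gmod m \<and> f x y \<noteq> fZ n Z x y}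
        \<le> (\<Sum>\<gamma>\<in>S. card {(x, y). x \<in> Gmod n \<and> y \<in> Gmod m \<and>
                 F x y \<noteq> F (mulG n (redmat n \<gamma>) x) (mulG m (redmat m \<gamma>) y)})"
    unfolding mismatch unfolding Z_def by (rule fibre_expansion[OF pos ndvd S_fin S_SL exp_m])
  also have "\<dots> < \<epsilon> * (real (card (Gmod n :: (int^'d^'d) set)) * real (card (Gmod m :: (int^'d^'d) set)) / 16)"
    unfolding F_def by (rule sum_card_disagreement_less[OF pos S_fin S_SL eps_pos delta_def f_bin close])
  finally have "real (card {(x, y). x \<in> Gmod n \<and> y \<in> Gmod m \<and> f x y \<noteq> fZ n Z x y})
      < real (card (Gmod n :: (int^'d^'d) set)) * real (card (Gmod m :: (int^'d^'d) set)) / 16"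
    using eps_pos by simp
  moreover have "Z \<subseteq> Gmod n" by (auto simp: Z_def majority_fibres_def)
  ultimately show ?thesis by blast
qed

end
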